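(* Let $p_t(x)=(2\pi t)^{-1/2}e^{-x^2/(2t)}$ and let $0<h\le 1$. For each integer $q\ge 2$, \[ \int\Big(\int_0^\infty \Delta^h\Delta^{-h}p_t(x)\,dt\Big)^q dx=\big(2^{q+1}/(q+1)+O(h^{1/2})\big)h^{q+1} \] and \[ \int\Big(\int_0^h \Delta^h\Delta^{-h}p_t(x)\,dt\Big)^q dx=\big(2^{q+1}/(q+1)+O(h^{1/2})\big)h^{q+1}, \] where the $O(h^{1/2})$ terms are bounded by $C_q h^{1/2}$ for a constant $C_q$ independent of $h$.
   Context: For a function $f$ on $\mathbb{R}$, $\Delta^h\Delta^{-h}f(x)=2f(x)-f(x+h)-f(x-h)$, acting in the space variable $x$. Integrals without limits are over $\mathbb{R}$. *)

theory Defs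
  imports "HOL-Analysis.Analysis"
begin

definition heat_kernel :: "real \<Rightarrow> real \<Rightarrow> real" where
  "heat_kernel t x = exp (- (x^2) / (2 * t)) / sqrt (2 * pi * t)"

text \<open>Second difference Delta^h Delta^(-h) f(x) = 2 f(x) - f(x+h) - f(x-h).\<close>
definition sym_diff2 :: "real \<Rightarrow> (real \<Rightarrow> real) \<Rightarrow> real \<Rightarrow> real" where
  "sym_diff2 h f x = 2 * f x - f (x + h) - f (x - h)"

end

theory Submission
  imports Defs "HOL-Probability.Probability" "HOL-Real_Asymp.Real_Asymp"
begin

text \<open>Integrating in time first, the heat kernel has explicit primitives:
  \<open>\<integral>\<^sub>0\<^sup>s p\<^sub>t(y) dt = E|y + \<surd>s Z| - |y|\<close> for a standard normal \<open>Z\<close>, and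
  \<open>\<integral>\<^sub>0\<^sup>\<infinity> (p\<^sub>t(a) - p\<^sub>t(b)) dt = |b| - |a|\<close>.
  Hence the inner integral over \<open>(0,\<infinity>)\<close> is exactly the tent \<open>2 max 0 (h - |x|)\<close>, whose
  \<open>q\<close>-th power integrates to \<open>2^(q+1) h^(q+1) / (q+1)\<close>. Over \<open>(0,h]\<close> the tent is perturbed
  by the second difference of the smoothed absolute value \<open>y \<mapsto> E|y + \<surd>h Z|\<close>, whose second
  derivative is \<open>2 p\<^sub>h\<close>; by the mean value theorem the perturbation is at most
  \<open>4 h^(3/2) exp (-x\<^sup>2/(4h))\<close>, which changes the integral of the \<open>q\<close>-th power by
  \<open>O(h^(q+3/2))\<close>.\<close>

definition erf :: "real \<Rightarrow> real" where
  "erf a = 2 / sqrt pi * (LBINT s=ereal 0..ereal a. exp (- (s^2)))"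

lemma has_real_derivative_erf: "(erf has_real_derivative 2 / sqrt pi * exp (- (x^2))) (at x)"
proof -
  define r where "r = \<bar>x\<bar> + 1"
  have "continuous_on {-r..r} (\<lambda>s::real. exp (- (s^2)))"
    by (intro continuous_intros)
  then have "((\<lambda>a. LBINT s=ereal 0..ereal a. exp (- (s^2))) has_vector_derivative exp (- (x^2)))
      (at x within {-r<..<r})"
    by (intro has_vector_derivative_within_subset[OF interval_integral_FTC2]) (auto simp: r_def)
  then have "((\<lambda>a. LBINT s=ereal 0..ereal a. exp (- (s^2))) has_vector_derivative exp (- (x^2))) (at x)"
    by (subst (asm) has_vector_derivative_within_open) (auto simp: r_def)
  then show ?thesis
    unfolding erf_def[abs_def]
    by (intro DERIV_cmult) (simp add: has_real_derivative_iff_has_vector_derivative)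
qed

lemma has_real_derivative_erf_chain [derivative_intros]:
  "(g has_real_derivative g') (at x within S) \<Longrightarrow>
    ((\<lambda>x. erf (g x)) has_real_derivative 2 / sqrt pi * exp (- ((g x)^2)) * g') (at x within S)"
  by (rule DERIV_chain2[OF has_real_derivative_erf])

lemma isCont_erf [continuous_intros]: "isCont erf x"
  using has_real_derivative_erf DERIV_isCont by blast

lemma erf_0 [simp]: "erf 0 = 0"
  by (simp add: erf_def)

lemma erf_minus: "erf (- a) = - erf a"
proof -
  have "((\<lambda>a. erf (- a) + erf a) has_real_derivative 0) (at x)" for x
    by (auto intro!: derivative_eq_intros has_real_derivative_erf_chain)
  with DERIV_isconst_all[of "\<lambda>a. erf (- a) + erf a" a 0] show ?thesis
    by simp
qed

lemma tendsto_erf_at_top: "(erf \<longlongrightarrow> 1) at_top"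
proof -
  have "has_bochner_integral lborel (\<lambda>x. indicator {0..} x *\<^sub>R exp (- x\<^sup>2)) (sqrt pi / 2)"
    by (rule gaussian_moment_0)
  then have integrable: "set_integrable lborel {0..} (\<lambda>x::real. exp (- x\<^sup>2))"
    and integral: "(LBINT x:{0..}. exp (- x\<^sup>2)) = sqrt pi / 2"
    by (auto simp: has_bochner_integral_iff set_integrable_def set_lebesgue_integral_def)
  have "((\<lambda>b. LBINT x:{0..b}. exp (- x\<^sup>2)) \<longlongrightarrow> sqrt pi / 2) at_top"
    using tendsto_set_lebesgue_integral_at_top[OF _ integrable] integral by auto
  then have "((\<lambda>b. 2 / sqrt pi * (LBINT x:{0..b}. exp (- x\<^sup>2))) \<longlongrightarrow> 2 / sqrt pi * (sqrt pi / 2)) at_top"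
    by (intro tendsto_intros)
  then have "((\<lambda>b. 2 / sqrt pi * (LBINT x:{0..b}. exp (- x\<^sup>2))) \<longlongrightarrow> 1) at_top"
    by simp
  then show ?thesis
    by (rule Lim_transform_eventually[OF _ eventually_mono[OF eventually_ge_at_top[of 0]]])
       (simp add: erf_def interval_integral_Icc)
qed

lemma tendsto_erf_div_sqrt_at_right_0:
  assumes "0 < c"
  shows "((\<lambda>t. erf (c / sqrt (2 * t))) \<longlongrightarrow> 1) (at_right 0)"
proof -
  have "filterlim (\<lambda>t. c / sqrt (2 * t)) at_top (at_right 0)"
    using assms by real_asymp
  then show ?thesis
    by (rule filterlim_compose[OF tendsto_erf_at_top])
qed

lemma heat_kernel_nonneg: "0 < t \<Longrightarrow> 0 \<le> heat_kernel t y"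
  unfolding heat_kernel_def by auto

lemma isCont_heat_kernel_time: "0 < t \<Longrightarrow> isCont (\<lambda>t. heat_kernel t y) t"
  unfolding heat_kernel_def by (intro continuous_intros) auto

lemma heat_kernel_antimono_abs:
  assumes "0 < t" "\<bar>a\<bar> \<le> \<bar>b\<bar>"
  shows "heat_kernel t b \<le> heat_kernel t a"
proof -
  have "a^2 \<le> b^2"
    using assms(2) by (simp add: abs_le_square_iff)
  then have "- (b^2) / (2 * t) \<le> - (a^2) / (2 * t)"
    using assms(1) by (simp add: divide_right_mono)
  then show ?thesis
    unfolding heat_kernel_def using assms(1) by (intro divide_right_mono) auto
qed

text \<open>\<open>smoothed_abs t y\<close> is \<open>E|y + \<surd>t Z|\<close> for a standard normal \<open>Z\<close>, i.e. the heat flow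
  started from the absolute value.\<close>

definition smoothed_abs :: "real \<Rightarrow> real \<Rightarrow> real" where
  "smoothed_abs t y =
     sqrt (2 * t) / sqrt pi * exp (- ((y / sqrt (2 * t))^2)) + y * erf (y / sqrt (2 * t))"

lemma heat_kernel_eq_sqrt:
  assumes "0 < t"
  shows "heat_kernel t y = exp (- ((y / sqrt (2 * t))^2)) / (sqrt pi * sqrt (2 * t))"
proof -
  have "sqrt pi * sqrt (2 * t) = sqrt (2 * pi * t)"
    by (simp add: real_sqrt_mult[symmetric] mult_ac)
  moreover have "(y / sqrt (2 * t))^2 = y^2 / (2 * t)"
    using assms by (simp add: power_divide)
  ultimately show ?thesis
    by (simp add: heat_kernel_def)
qed

lemma has_real_derivative_erf_div:
  "r \<noteq> 0 \<Longrightarrow> ((\<lambda>y. erf (y / r)) has_real_derivative 2 / sqrt pi * exp (- ((y / r)^2)) / r) (at y)"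
  by (auto intro!: derivative_eq_intros has_real_derivative_erf_chain)

text \<open>Derivatives in the scale \<open>r = \<surd>(2t)\<close>, in which \<open>smoothed_abs\<close> is a polynomial in \<open>r\<close>,
  \<open>exp (-(y/r)\<^sup>2)\<close> and \<open>erf (y/r)\<close>.\<close>

lemma has_real_derivative_smoothed_abs_scale:
  assumes "r \<noteq> 0"
  shows "((\<lambda>r. r / sqrt pi * exp (- ((y / r)^2)) + y * erf (y / r)) has_real_derivative
      exp (- ((y / r)^2)) / sqrt pi) (at r)"
  using assms
  by (auto intro!: derivative_eq_intros has_real_derivative_erf_chain simp: field_simps power2_eq_square)

lemma has_real_derivative_smoothed_abs_space_scale:
  assumes "r \<noteq> 0"
  shows "((\<lambda>y. r / sqrt pi * exp (- ((y / r)^2)) + y * erf (y / r)) has_real_derivative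
      erf (y / r)) (at y)"
  using assms
  by (auto intro!: derivative_eq_intros has_real_derivative_erf_chain simp: field_simps power2_eq_square)

lemma has_real_derivative_smoothed_abs_time:
  assumes "0 < t"
  shows "((\<lambda>t. smoothed_abs t y) has_real_derivative heat_kernel t y) (at t)"
proof -
  have "((\<lambda>t. sqrt (2 * t)) has_real_derivative 1 / sqrt (2 * t)) (at t)"
    using assms by (auto intro!: derivative_eq_intros simp: field_simps)
  from DERIV_chain2[OF has_real_derivative_smoothed_abs_scale this] assms
  show ?thesis
    by (simp add: smoothed_abs_def heat_kernel_eq_sqrt)
qed

lemma has_real_derivative_smoothed_abs_space:
  "0 < t \<Longrightarrow> (smoothed_abs t has_real_derivative erf (y / sqrt (2 * t))) (at y)"
  unfolding smoothed_abs_def[abs_def] by (rule has_real_derivative_smoothed_abs_space_scale) simp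

lemma has_real_derivative_erf_div_sqrt:
  "0 < t \<Longrightarrow> ((\<lambda>y. erf (y / sqrt (2 * t))) has_real_derivative 2 * heat_kernel t y) (at y)"
  using has_real_derivative_erf_div[of "sqrt (2 * t)" y] by (simp add: heat_kernel_eq_sqrt)

lemma tendsto_smoothed_abs_at_right_0: "((\<lambda>t. smoothed_abs t y) \<longlongrightarrow> \<bar>y\<bar>) (at_right 0)"
proof -
  have "((\<lambda>t. sqrt (2 * t) / sqrt pi * exp (- ((y / sqrt (2 * t))^2))) \<longlongrightarrow> 0) (at_right 0)"
  proof (rule Lim_null_comparison)
    show "\<forall>\<^sub>F t in at_right 0. norm (sqrt (2 * t) / sqrt pi * exp (- ((y / sqrt (2 * t))^2)))
        \<le> sqrt (2 * t) / sqrt pi"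
    proof (rule eventually_mono[OF eventually_at_right_less])
      fix t :: real
      assume "0 < t"
      then have "sqrt (2 * t) / sqrt pi * exp (- ((y / sqrt (2 * t))^2)) \<le> sqrt (2 * t) / sqrt pi * 1"
        by (intro mult_left_mono) auto
      with \<open>0 < t\<close> show "norm (sqrt (2 * t) / sqrt pi * exp (- ((y / sqrt (2 * t))^2)))
          \<le> sqrt (2 * t) / sqrt pi"
        by simp
    qed
    show "((\<lambda>t. sqrt (2 * t) / sqrt pi) \<longlongrightarrow> 0) (at_right 0)"
      by real_asymp
  qed
  moreover have "((\<lambda>t. y * erf (y / sqrt (2 * t))) \<longlongrightarrow> \<bar>y\<bar>) (at_right 0)"
  proof (cases "y = 0")
    case False
    have "y * erf (y / sqrt (2 * t)) = \<bar>y\<bar> * erf (\<bar>y\<bar> / sqrt (2 * t))" for t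
      by (cases "0 \<le> y") (auto simp: erf_minus)
    moreover have "((\<lambda>t. \<bar>y\<bar> * erf (\<bar>y\<bar> / sqrt (2 * t))) \<longlongrightarrow> \<bar>y\<bar> * 1) (at_right 0)"
      using False by (intro tendsto_intros tendsto_erf_div_sqrt_at_right_0) simp
    ultimately show ?thesis
      by simp
  qed simp
  ultimately show ?thesis
    unfolding smoothed_abs_def using tendsto_add by fastforce
qed

lemma tendsto_smoothed_abs_minus_sqrt_at_top:
  "((\<lambda>t. smoothed_abs t y - sqrt (2 * t) / sqrt pi) \<longlongrightarrow> 0) at_top"
proof -
  have "((\<lambda>t. sqrt (2 * t) / sqrt pi * (exp (- ((y / sqrt (2 * t))^2)) - 1)) \<longlongrightarrow> 0) at_top"
  proof (rule Lim_null_comparison)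
    show "\<forall>\<^sub>F t in at_top. norm (sqrt (2 * t) / sqrt pi * (exp (- ((y / sqrt (2 * t))^2)) - 1))
        \<le> y^2 * (sqrt (2 * t) / sqrt pi / (2 * t))"
    proof (rule eventually_mono[OF eventually_gt_at_top[of 0]])
      fix t :: real
      assume "0 < t"
      then have "\<bar>exp (- ((y / sqrt (2 * t))^2)) - 1\<bar> \<le> y^2 / (2 * t)"
        using exp_minus_ge[of "(y / sqrt (2 * t))^2"] by (simp add: power_divide)
      then have "sqrt (2 * t) / sqrt pi * \<bar>exp (- ((y / sqrt (2 * t))^2)) - 1\<bar>
          \<le> sqrt (2 * t) / sqrt pi * (y^2 / (2 * t))"
        using \<open>0 < t\<close> by (intro mult_left_mono) auto
      then show "norm (sqrt (2 * t) / sqrt pi * (exp (- ((y / sqrt (2 * t))^2)) - 1))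
          \<le> y^2 * (sqrt (2 * t) / sqrt pi / (2 * t))"
        using \<open>0 < t\<close> by (simp add: abs_mult mult_ac)
    qed
    have "((\<lambda>t. sqrt (2 * t) / sqrt pi / (2 * t)) \<longlongrightarrow> 0) at_top"
      by real_asymp
    then show "((\<lambda>t. y^2 * (sqrt (2 * t) / sqrt pi / (2 * t))) \<longlongrightarrow> 0) at_top"
      by (rule tendsto_mult_right_zero)
  qed
  moreover have "((\<lambda>t. y * erf (y / sqrt (2 * t))) \<longlongrightarrow> y * erf (y * 0)) at_top"
  proof -
    have "((\<lambda>t. 1 / sqrt (2 * t)) \<longlongrightarrow> 0) at_top"
      by real_asymp
    then have "((\<lambda>t. y * (1 / sqrt (2 * t))) \<longlongrightarrow> y * 0) at_top"
      by (intro tendsto_intros)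
    then show ?thesis
      by (intro tendsto_intros isCont_tendsto_compose[OF isCont_erf]) simp
  qed
  ultimately have "((\<lambda>t. sqrt (2 * t) / sqrt pi * (exp (- ((y / sqrt (2 * t))^2)) - 1)
      + y * erf (y / sqrt (2 * t))) \<longlongrightarrow> 0) at_top"
    using tendsto_add by fastforce
  then show ?thesis
    by (simp add: smoothed_abs_def algebra_simps)
qed

lemma heat_kernel_integral_Ioc:
  assumes "0 < s"
  shows "set_integrable lborel {0<..s} (\<lambda>t. heat_kernel t y)"
    and "(LBINT t:{0<..s}. heat_kernel t y) = smoothed_abs s y - \<bar>y\<bar>"
proof -
  have FTC: "set_integrable lborel {0<..<b} (\<lambda>t. heat_kernel t y) \<and>
      (LBINT t=ereal 0..ereal b. heat_kernel t y) = smoothed_abs b y - \<bar>y\<bar>" if "0 < b" for b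
  proof -
    have lim_0: "(((\<lambda>t. smoothed_abs t y) \<circ> real_of_ereal) \<longlongrightarrow> \<bar>y\<bar>) (at_right (ereal 0))"
      unfolding ereal_tendsto_simps by (rule tendsto_smoothed_abs_at_right_0)
    have lim_b: "(((\<lambda>t. smoothed_abs t y) \<circ> real_of_ereal) \<longlongrightarrow> smoothed_abs b y) (at_left (ereal b))"
      unfolding ereal_tendsto_simps
      using DERIV_isCont[OF has_real_derivative_smoothed_abs_time[OF that]]
      by (simp add: isCont_def filterlim_at_split)
    note FTC = interval_integral_FTC_nonneg[of "ereal 0" "ereal b" "\<lambda>t. smoothed_abs t y"
        "\<lambda>t. heat_kernel t y", OF _ _ _ _ lim_0 lim_b]
    show ?thesis
      using that
      by (auto intro!: FTC[unfolded einterval_eq_Icc] has_real_derivative_smoothed_abs_time isCont_heat_kernel_time heat_kernel_nonneg)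
  qed
  show "set_integrable lborel {0<..s} (\<lambda>t. heat_kernel t y)"
    using assms by (intro set_integrable_subset[OF conjunct1[OF FTC[of "2 * s"]]]) auto
  show "(LBINT t:{0<..s}. heat_kernel t y) = smoothed_abs s y - \<bar>y\<bar>"
    using assms FTC[of s] interval_integral_Ioc[of 0 s "\<lambda>t. heat_kernel t y"] by simp
qed

text \<open>The ordering makes the integrand nonnegative, as \<open>interval_integral_FTC_nonneg\<close> requires.\<close>

lemma heat_kernel_diff_integral_Ioi_ordered:
  assumes "\<bar>a\<bar> \<le> \<bar>b\<bar>"
  shows "set_integrable lborel {0<..} (\<lambda>t. heat_kernel t a - heat_kernel t b) \<and>
    (LBINT t:{0<..}. heat_kernel t a - heat_kernel t b) = \<bar>b\<bar> - \<bar>a\<bar>"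
proof -
  let ?F = "\<lambda>t. smoothed_abs t a - smoothed_abs t b"
  have lim_0: "((?F \<circ> real_of_ereal) \<longlongrightarrow> \<bar>a\<bar> - \<bar>b\<bar>) (at_right (ereal 0))"
    unfolding ereal_tendsto_simps by (intro tendsto_diff tendsto_smoothed_abs_at_right_0)
  have lim_top: "((?F \<circ> real_of_ereal) \<longlongrightarrow> 0) (at_left \<infinity>)"
    unfolding ereal_tendsto_simps
    using tendsto_diff[OF tendsto_smoothed_abs_minus_sqrt_at_top[of a]
        tendsto_smoothed_abs_minus_sqrt_at_top[of b]] by simp
  have "(?F has_real_derivative heat_kernel t a - heat_kernel t b) (at t)" if "0 < t" for t
    using that by (auto intro!: derivative_eq_intros has_real_derivative_smoothed_abs_time)
  moreover have "isCont (\<lambda>t. heat_kernel t a - heat_kernel t b) t" if "0 < t" for t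
    using that by (intro continuous_intros isCont_heat_kernel_time)
  moreover have "0 \<le> heat_kernel t a - heat_kernel t b" if "0 < t" for t
    using that assms heat_kernel_antimono_abs by simp
  ultimately show ?thesis
    using interval_integral_FTC_nonneg[of "ereal 0" \<infinity> ?F
      "\<lambda>t. heat_kernel t a - heat_kernel t b", OF _ _ _ _ lim_0 lim_top]
    by (simp add: interval_integral_to_infinity_eq)
qed

lemma heat_kernel_diff_integral_Ioi:
  shows "set_integrable lborel {0<..} (\<lambda>t. heat_kernel t a - heat_kernel t b)"
    and "(LBINT t:{0<..}. heat_kernel t a - heat_kernel t b) = \<bar>b\<bar> - \<bar>a\<bar>"
proof -
  have "set_integrable lborel {0<..} (\<lambda>t. heat_kernel t a - heat_kernel t b) \<and>
    (LBINT t:{0<..}. heat_kernel t a - heat_kernel t b) = \<bar>b\<bar> - \<bar>a\<bar>"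
  proof (cases "\<bar>a\<bar> \<le> \<bar>b\<bar>")
    case False
    then have ba: "set_integrable lborel {0<..} (\<lambda>t. heat_kernel t b - heat_kernel t a)"
      "(LBINT t:{0<..}. heat_kernel t b - heat_kernel t a) = \<bar>a\<bar> - \<bar>b\<bar>"
      using heat_kernel_diff_integral_Ioi_ordered[of b a] by auto
    have "set_integrable lborel {0<..} (\<lambda>t. - 1 * (heat_kernel t b - heat_kernel t a))"
      using ba(1) by (rule set_integrable_mult_right)
    moreover have "(LBINT t:{0<..}. - (heat_kernel t b - heat_kernel t a)) = \<bar>b\<bar> - \<bar>a\<bar>"
      using set_integral_uminus[OF ba(1)] ba(2) by simp
    ultimately show ?thesis
      by simp
  qed (rule heat_kernel_diff_integral_Ioi_ordered)
  then show "set_integrable lborel {0<..} (\<lambda>t. heat_kernel t a - heat_kernel t b)"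
    and "(LBINT t:{0<..}. heat_kernel t a - heat_kernel t b) = \<bar>b\<bar> - \<bar>a\<bar>"
    by auto
qed

lemma sym_diff2_eq: "sym_diff2 h f x = (f x - f (x + h)) + (f x - f (x - h))"
  by (simp add: sym_diff2_def)

lemma integral_sym_diff2_heat_kernel_Ioi:
  "(LBINT t:{0<..}. sym_diff2 h (\<lambda>y. heat_kernel t y) x) = - sym_diff2 h abs x"
proof -
  have "(LBINT t:{0<..}. sym_diff2 h (\<lambda>y. heat_kernel t y) x) =
      (LBINT t:{0<..}. (heat_kernel t x - heat_kernel t (x + h)) + (heat_kernel t x - heat_kernel t (x - h)))"
    by (simp only: sym_diff2_eq)
  also have "\<dots> = (\<bar>x + h\<bar> - \<bar>x\<bar>) + (\<bar>x - h\<bar> - \<bar>x\<bar>)"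
    unfolding set_integral_add(2)[OF heat_kernel_diff_integral_Ioi(1) heat_kernel_diff_integral_Ioi(1)]
      heat_kernel_diff_integral_Ioi(2) ..
  finally show ?thesis
    by (simp add: sym_diff2_def)
qed

lemma integral_sym_diff2_heat_kernel_Ioc:
  assumes "0 < s"
  shows "(LBINT t:{0<..s}. sym_diff2 h (\<lambda>y. heat_kernel t y) x) =
    sym_diff2 h (smoothed_abs s) x - sym_diff2 h abs x"
proof -
  note integrable = heat_kernel_integral_Ioc(1)[OF assms]
  have "(LBINT t:{0<..s}. sym_diff2 h (\<lambda>y. heat_kernel t y) x) =
      (LBINT t:{0<..s}. (heat_kernel t x - heat_kernel t (x + h)) + (heat_kernel t x - heat_kernel t (x - h)))"
    by (simp only: sym_diff2_eq)
  also have "\<dots> = (smoothed_abs s x - \<bar>x\<bar> - (smoothed_abs s (x + h) - \<bar>x + h\<bar>))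
      + (smoothed_abs s x - \<bar>x\<bar> - (smoothed_abs s (x - h) - \<bar>x - h\<bar>))"
    unfolding set_integral_add(2)[OF set_integral_diff(1)[OF integrable integrable]
        set_integral_diff(1)[OF integrable integrable]]
      set_integral_diff(2)[OF integrable integrable] heat_kernel_integral_Ioc(2)[OF assms] ..
  finally show ?thesis
    by (simp add: sym_diff2_def)
qed

definition tent :: "real \<Rightarrow> real \<Rightarrow> real" where
  "tent h x = 2 * max 0 (h - \<bar>x\<bar>)"

lemma sym_diff2_abs: "0 \<le> h \<Longrightarrow> sym_diff2 h abs x = - tent h x"
  by (simp add: sym_diff2_def tent_def max_def abs_if)

lemma tent_nonneg: "0 \<le> tent h x"
  by (simp add: tent_def)

lemma tent_le: "0 \<le> h \<Longrightarrow> tent h x \<le> 2 * h"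
  by (simp add: tent_def)

lemma tent_eq_0: "h \<le> \<bar>x\<bar> \<Longrightarrow> tent h x = 0"
  by (simp add: tent_def)

lemma continuous_on_tent [continuous_intros]: "continuous_on A (tent h)"
  unfolding tent_def[abs_def] by (intro continuous_intros)

lemma interval_integral_affine_power:
  fixes f :: "real \<Rightarrow> real"
  assumes "a \<le> b" "u \<noteq> 0" and affine: "\<And>x. a \<le> x \<Longrightarrow> x \<le> b \<Longrightarrow> f x = u * x + v"
  shows "(LBINT x=a..b. f x ^ n) = ((u * b + v)^(n + 1) - (u * a + v)^(n + 1)) / (u * (n + 1))"
proof -
  have "continuous_on {a..b} (\<lambda>x. u * x + v)"
    by (intro continuous_intros)
  then have "continuous_on {a..b} f"
    by (rule continuous_on_eq) (simp add: affine)
  then have "continuous_on {min a b..max a b} (\<lambda>x. f x ^ n)"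
    using assms(1) by (auto intro!: continuous_intros)
  moreover have "((\<lambda>x. (u * x + v)^(n + 1) / (u * (n + 1))) has_vector_derivative f x ^ n)
      (at x within {min a b..max a b})" if "min a b \<le> x" "x \<le> max a b" for x
  proof -
    have "((\<lambda>x. (u * x + v)^m) has_real_derivative real m * (u * x + v)^(m - 1) * u) (at x)" for m
      by (auto intro!: derivative_eq_intros)
    then have "((\<lambda>x. (u * x + v)^(n + 1)) has_real_derivative real (n + 1) * (u * x + v)^n * u) (at x)"
      by (metis add_diff_cancel_right')
    then have "((\<lambda>x. (u * x + v)^(n + 1) / (u * (n + 1))) has_real_derivative
        real (n + 1) * (u * x + v)^n * u / (u * (n + 1))) (at x)"
      by (rule DERIV_cdivide)
    moreover have "real (n + 1) * (u * x + v)^n * u / (u * (n + 1)) = (u * x + v)^n"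
      using assms(2) by (simp del: of_nat_Suc)
    ultimately have "((\<lambda>x. (u * x + v)^(n + 1) / (u * (n + 1))) has_real_derivative (u * x + v)^n) (at x)"
      by simp
    then show ?thesis
      using that assms(1) affine
      by (simp add: has_real_derivative_iff_has_vector_derivative has_vector_derivative_at_within)
  qed
  ultimately show ?thesis
    by (subst interval_integral_FTC_finite) (simp_all add: diff_divide_distrib)
qed

lemma integral_tent_power:
  assumes "0 < h" "1 \<le> q"
  shows "integrable lborel (\<lambda>x. tent h x ^ q)"
    and "(LBINT x. tent h x ^ q) = 2^(q + 1) / real (q + 1) * h^(q + 1)"
proof -
  have vanish: "tent h x ^ q = indicator {-h..h} x * tent h x ^ q" for x
    using assms by (cases "x \<in> {-h..h}") (auto simp: tent_eq_0)
  have "set_integrable lborel {-h..h} (\<lambda>x. tent h x ^ q)"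
    by (intro borel_integrable_atLeastAtMost' continuous_intros)
  then show "integrable lborel (\<lambda>x. tent h x ^ q)"
    by (subst vanish) (simp add: set_integrable_def)
  have "interval_lebesgue_integrable lborel (-h) h (\<lambda>x. tent h x ^ q)"
    using assms by (intro interval_integrable_continuous_on continuous_intros) simp
  then have "(LBINT x. tent h x ^ q) = (LBINT x=-h..ereal 0. tent h x ^ q) + (LBINT x=ereal 0..h. tent h x ^ q)"
    using assms
    by (subst vanish, subst interval_integral_sum)
       (simp_all add: interval_integral_Icc set_lebesgue_integral_def min_def max_def)
  also have "(LBINT x=-h..ereal 0. tent h x ^ q) = (2 * h)^(q + 1) / (2 * real (q + 1))"
    using assms by (subst interval_integral_affine_power[where u = 2 and v = "2 * h"])
      (auto simp: tent_def)
  also have "(LBINT x=ereal 0..h. tent h x ^ q) = (2 * h)^(q + 1) / (2 * real (q + 1))"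
    using assms by (subst interval_integral_affine_power[where u = "-2" and v = "2 * h"])
      (auto simp: tent_def field_simps)
  also have "z / (2 * r) + z / (2 * r) = z / r" for z r :: real
    by (simp add: field_simps)
  finally show "(LBINT x. tent h x ^ q) = 2^(q + 1) / real (q + 1) * h^(q + 1)"
    by (simp add: power_mult_distrib)
qed

lemma sym_diff2_second_derivative:
  fixes f f' f'' :: "real \<Rightarrow> real"
  assumes f': "\<And>y. (f has_real_derivative f' y) (at y)"
    and f'': "\<And>y. (f' has_real_derivative f'' y) (at y)" and "0 < h"
  obtains \<eta> d where "\<bar>\<eta> - x\<bar> < h" "0 < d" "d < 2 * h" "sym_diff2 h f x = - (h * d * f'' \<eta>)"
proof -
  obtain z\<^sub>1 where z\<^sub>1: "x < z\<^sub>1" "z\<^sub>1 < x + h" "f (x + h) - f x = h * f' z\<^sub>1"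
    using MVT2[of x "x + h" f f'] f' \<open>0 < h\<close> by auto
  obtain z\<^sub>2 where z\<^sub>2: "x - h < z\<^sub>2" "z\<^sub>2 < x" "f x - f (x - h) = h * f' z\<^sub>2"
    using MVT2[of "x - h" x f f'] f' \<open>0 < h\<close> by auto
  obtain \<eta> where \<eta>: "z\<^sub>2 < \<eta>" "\<eta> < z\<^sub>1" "f' z\<^sub>1 - f' z\<^sub>2 = (z\<^sub>1 - z\<^sub>2) * f'' \<eta>"
    using MVT2[of z\<^sub>2 z\<^sub>1 f' f''] f'' z\<^sub>1 z\<^sub>2 by auto
  have "sym_diff2 h f x = - (h * (f' z\<^sub>1 - f' z\<^sub>2))"
    using z\<^sub>1(3) z\<^sub>2(3) by (simp add: sym_diff2_def algebra_simps)
  then show ?thesis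
    using z\<^sub>1 z\<^sub>2 \<eta> by (intro that[of \<eta> "z\<^sub>1 - z\<^sub>2"]) auto
qed

lemma continuous_on_sym_diff2 [continuous_intros]:
  "continuous_on UNIV f \<Longrightarrow> continuous_on UNIV (sym_diff2 h f)"
  unfolding sym_diff2_def[abs_def]
  by (intro continuous_intros; rule continuous_on_compose2[of UNIV f]) (auto intro: continuous_intros)

lemma heat_kernel_le_shifted_gaussian:
  assumes "0 < h" "h \<le> 1" "\<bar>\<eta> - x\<bar> < h"
  shows "heat_kernel h \<eta> \<le> exp (- (x^2) / (4 * h)) / sqrt h"
proof -
  have "(x - \<eta>)^2 \<le> h^2"
    using assms by (simp add: abs_le_square_iff[symmetric] abs_minus_commute less_imp_le)
  moreover have "h^2 \<le> h"
    using assms by (simp add: power2_eq_square mult_le_one)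
  moreover have "x^2 \<le> 2 * \<eta>^2 + 2 * (x - \<eta>)^2"
    using zero_le_power2[of "x - 2 * \<eta>"] by (simp add: power2_eq_square algebra_simps)
  ultimately have "x^2 \<le> 2 * \<eta>^2 + 2 * h"
    by linarith
  then have "- (\<eta>^2) / (2 * h) \<le> 1 / 2 + - (x^2) / (4 * h)"
    using assms by (simp add: field_simps)
  then have "exp (- (\<eta>^2) / (2 * h)) \<le> exp (1 / 2) * exp (- (x^2) / (4 * h))"
    by (simp only: exp_le_cancel_iff flip: exp_add)
  also have "exp (1 / 2 :: real) \<le> sqrt (2 * pi)"
  proof -
    have "exp (1 / 2 :: real) = sqrt (exp 1)"
      by (intro real_sqrt_unique[symmetric]) (auto simp: power2_eq_square simp flip: exp_add)
    also have "\<dots> \<le> sqrt (2 * pi)"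
      using exp_le pi_gt3 by simp
    finally show ?thesis .
  qed
  finally have bound: "exp (- (\<eta>^2) / (2 * h)) \<le> sqrt (2 * pi) * exp (- (x^2) / (4 * h))"
    by simp
  have "heat_kernel h \<eta> = exp (- (\<eta>^2) / (2 * h)) / (sqrt (2 * pi) * sqrt h)"
    by (simp add: heat_kernel_def real_sqrt_mult)
  also have "\<dots> \<le> sqrt (2 * pi) * exp (- (x^2) / (4 * h)) / (sqrt (2 * pi) * sqrt h)"
    using bound assms by (intro divide_right_mono) auto
  also have "\<dots> = exp (- (x^2) / (4 * h)) / sqrt h"
    by simp
  finally show ?thesis .
qed

lemma sym_diff2_smoothed_abs_bounds:
  assumes "0 < h" "h \<le> 1"
  shows "0 \<le> - sym_diff2 h (smoothed_abs h) x"
    and "- sym_diff2 h (smoothed_abs h) x \<le> 4 * h * sqrt h * exp (- (x^2) / (4 * h))"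
proof -
  have "(smoothed_abs h has_real_derivative erf (y / sqrt (2 * h))) (at y)"
    and "((\<lambda>y. erf (y / sqrt (2 * h))) has_real_derivative 2 * heat_kernel h y) (at y)" for y
    using assms by (simp_all add: has_real_derivative_smoothed_abs_space has_real_derivative_erf_div_sqrt)
  then obtain \<eta> d where \<eta>: "\<bar>\<eta> - x\<bar> < h" and d: "0 < d" "d < 2 * h"
    and "sym_diff2 h (smoothed_abs h) x = - (h * d * (2 * heat_kernel h \<eta>))"
    using assms(1) by (rule sym_diff2_second_derivative)
  then have eq: "- sym_diff2 h (smoothed_abs h) x = h * d * (2 * heat_kernel h \<eta>)"
    by simp
  show "0 \<le> - sym_diff2 h (smoothed_abs h) x"
    unfolding eq using assms d heat_kernel_nonneg[of h \<eta>] by simp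
  have "h * d * (2 * heat_kernel h \<eta>) \<le> h * (2 * h) * (2 * (exp (- (x^2) / (4 * h)) / sqrt h))"
    using assms d heat_kernel_nonneg[of h \<eta>] heat_kernel_le_shifted_gaussian[OF assms \<eta>]
    by (intro mult_mono) auto
  also have "\<dots> = 4 * h * (h / sqrt h) * exp (- (x^2) / (4 * h))"
    by simp
  also have "\<dots> = 4 * h * sqrt h * exp (- (x^2) / (4 * h))"
    using assms by (simp add: real_div_sqrt)
  finally show "- sym_diff2 h (smoothed_abs h) x \<le> 4 * h * sqrt h * exp (- (x^2) / (4 * h))"
    unfolding eq .
qed

lemma gaussian_integral:
  assumes "0 < c"
  shows "integrable lborel (\<lambda>x. exp (- (x^2) / c))"
    and "(LBINT x. exp (- (x^2) / c)) = sqrt (pi * c)"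
proof -
  have eq: "exp (- (x^2) / c) = sqrt (pi * c) * normal_density 0 (sqrt (c / 2)) x" for x
    using assms by (simp add: normal_density_def)
  have "0 < sqrt (c / 2)"
    using assms by simp
  then show "integrable lborel (\<lambda>x. exp (- (x^2) / c))"
    unfolding eq by (intro integrable_mult_right integrable_normal_density)
  show "(LBINT x. exp (- (x^2) / c)) = sqrt (pi * c)"
    using assms unfolding eq by simp
qed

lemma abs_power_diff_le:
  fixes a b c :: real
  assumes "\<bar>a\<bar> \<le> c" "\<bar>b\<bar> \<le> c"
  shows "\<bar>a^n - b^n\<bar> \<le> real n * c^(n - 1) * \<bar>a - b\<bar>"
proof -
  have *: "\<bar>u^n - v^n\<bar> \<le> real n * c^(n - 1) * \<bar>u - v\<bar>"
    if "v < u" "\<bar>u\<bar> \<le> c" "\<bar>v\<bar> \<le> c" for u v :: real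
  proof -
    have "\<exists>z>v. z < u \<and> u^n - v^n = (u - v) * (real n * z^(n - 1))"
      by (rule MVT2[OF that(1)]) (auto intro!: derivative_eq_intros)
    then obtain z where z: "v < z" "z < u" "u^n - v^n = (u - v) * (real n * z^(n - 1))"
      by blast
    have "\<bar>z^(n - 1)\<bar> \<le> c^(n - 1)"
      unfolding power_abs using z that by (intro power_mono) auto
    then show ?thesis
      using z by (simp add: abs_mult mult_left_mono mult_ac)
  qed
  show ?thesis
    using *[of a b] *[of b a] assms
    by (cases a b rule: linorder_cases) (simp_all add: abs_minus_commute)
qed

lemma integral_diff_le_of_abs_le:
  fixes f g b :: "'a::euclidean_space \<Rightarrow> real"
  assumes "integrable M f" "integrable M b" "g \<in> borel_measurable M"
    and le: "\<And>x. x \<in> space M \<Longrightarrow> \<bar>g x - f x\<bar> \<le> b x"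
  shows "integrable M g" and "\<bar>integral\<^sup>L M g - integral\<^sup>L M f\<bar> \<le> integral\<^sup>L M b"
proof -
  have "AE x in M. norm (g x - f x) \<le> norm (b x)"
    using le by (intro AE_I2) (metis abs_ge_self order_trans real_norm_def)
  then have diff: "integrable M (\<lambda>x. g x - f x)"
    using assms(1,3) by (intro Bochner_Integration.integrable_bound[OF assms(2)]) auto
  then have "integrable M (\<lambda>x. (g x - f x) + f x)"
    using assms(1) by (rule Bochner_Integration.integrable_add)
  then show "integrable M g"
    by simp
  then show "\<bar>integral\<^sup>L M g - integral\<^sup>L M f\<bar> \<le> integral\<^sup>L M b"
    using integral_abs_bound_integral[OF diff assms(2) le] assms(1) by simp
qed

lemma abs_power_tent_minus_le:
  fixes g w M :: real
  assumes "0 < h" "1 \<le> q" "0 \<le> g" "g \<le> M * w" "0 \<le> w" "w \<le> 1" "0 \<le> M" "M \<le> 4 * h"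
  shows "\<bar>(tent h x - g)^q - tent h x ^ q\<bar> \<le> real q * (4 * h)^(q - 1) * M * indicator {-h..h} x + M^q * w"
proof (cases "x \<in> {-h..h}")
  case True
  have "g \<le> M"
    using assms mult_left_le[of w M] by linarith
  then have "\<bar>(tent h x - g)^q - tent h x ^ q\<bar> \<le> real q * (4 * h)^(q - 1) * \<bar>tent h x - g - tent h x\<bar>"
    using assms tent_nonneg[of h x] tent_le[of h x] by (intro abs_power_diff_le) auto
  also have "\<dots> \<le> real q * (4 * h)^(q - 1) * M"
    using assms \<open>g \<le> M\<close> by (intro mult_left_mono) auto
  finally have "\<bar>(tent h x - g)^q - tent h x ^ q\<bar> \<le> real q * (4 * h)^(q - 1) * M" .
  moreover have "0 \<le> M^q * w"
    using assms by simp
  ultimately show ?thesis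
    using True by simp
next
  case False
  then have "tent h x = 0"
    by (intro tent_eq_0) auto
  then have "\<bar>(tent h x - g)^q - tent h x ^ q\<bar> = g^q"
    using assms by (simp add: power_abs zero_power)
  also have "\<dots> \<le> (M * w)^q"
    using assms by (intro power_mono) auto
  also have "\<dots> \<le> M^q * w"
    using assms power_decreasing[of 1 q w] by (simp add: power_mult_distrib mult_left_mono)
  finally show ?thesis
    using False by simp
qed

lemma tent_perturbation_constant_le:
  assumes "0 < h" "h \<le> 1" "2 \<le> q"
  shows "real q * (4 * h)^(q - 1) * (4 * h * sqrt h) * (2 * h) + (4 * h * sqrt h)^q * sqrt (pi * (4 * h))
    \<le> (2 * real q + 4) * 4^q * sqrt h * h^(q + 1)"
proof -
  define s where "s = sqrt h"
  have s: "0 < s" "s \<le> 1" "h = s^2"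
    using assms by (auto simp: s_def)
  have "real q * (4 * h)^(q - 1) * (4 * h * sqrt h) * (2 * h) = 2 * real q * (4 * h)^(q - 1 + 1) * s * h"
    by (simp add: s_def)
  also have "\<dots> = 2 * real q * 4^q * s * h^(q + 1)"
    using assms by (simp add: power_mult_distrib)
  finally have first: "real q * (4 * h)^(q - 1) * (4 * h * sqrt h) * (2 * h) = 2 * real q * 4^q * s * h^(q + 1)" .
  have "(4 * h * sqrt h)^q * sqrt (pi * (4 * h)) = 4^q * h^q * s^q * (2 * sqrt pi) * s"
    using assms by (simp add: s_def power_mult_distrib real_sqrt_mult)
  also have "\<dots> \<le> 4^q * h^q * s^2 * 4 * s"
  proof -
    have "s^q \<le> s^2"
      using power_decreasing[OF assms(3), of s] s by simp
    moreover have "2 * sqrt pi \<le> 4"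
      using real_sqrt_le_iff[of pi 4] pi_less_4 by simp
    ultimately show ?thesis
      using s by (intro mult_right_mono mult_mono mult_left_mono) auto
  qed
  also have "\<dots> = 4 * 4^q * s * h^(q + 1)"
    using s by (simp add: power_add)
  finally show ?thesis
    unfolding first by (simp add: s_def algebra_simps)
qed

lemma integral_power_tent_minus_bound:
  fixes g :: "real \<Rightarrow> real"
  assumes h: "0 < h" "h \<le> 1" and q: "2 \<le> q" and "continuous_on UNIV g"
    and g: "\<And>x. 0 \<le> g x" "\<And>x. g x \<le> 4 * h * sqrt h * exp (- (x^2) / (4 * h))"
  shows "integrable lborel (\<lambda>x. (tent h x - g x)^q)"
    and "\<bar>(LBINT x. (tent h x - g x)^q) - (LBINT x. tent h x ^ q)\<bar> \<le> (2 * real q + 4) * 4^q * sqrt h * h^(q + 1)"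
proof -
  define M where "M = 4 * h * sqrt h"
  define w where "w x = exp (- (x^2) / (4 * h))" for x
  define \<beta> where "\<beta> x = real q * (4 * h)^(q - 1) * M * indicator {-h..h} x + M^q * w x" for x
  have pointwise: "\<bar>(tent h x - g x)^q - tent h x ^ q\<bar> \<le> \<beta> x" for x
    unfolding \<beta>_def using h q g[of x]
    by (intro abs_power_tent_minus_le) (auto simp: M_def w_def real_sqrt_le_1_iff)
  have w: "integrable lborel w" "(LBINT x. w x) = sqrt (pi * (4 * h))"
    unfolding w_def[abs_def] using gaussian_integral[of "4 * h"] h by simp_all
  have indicator: "integrable lborel (\<lambda>x. indicator {-h..h} x :: real)"
    "(LBINT x. indicator {-h..h} x :: real) = 2 * h"
    using h by (simp_all add: emeasure_lborel_Icc integrable_real_indicator)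
  have \<beta>: "integrable lborel \<beta>"
    unfolding \<beta>_def[abs_def]
    by (intro Bochner_Integration.integrable_add integrable_mult_right indicator(1) w(1))
  have "continuous_on UNIV (\<lambda>x. (tent h x - g x)^q)"
    by (intro continuous_intros assms(4))
  then have "(\<lambda>x. (tent h x - g x)^q) \<in> borel_measurable lborel"
    using borel_measurable_continuous_onI by simp
  note perturbation = integral_diff_le_of_abs_le[OF integral_tent_power(1) \<beta> this pointwise]
  show "integrable lborel (\<lambda>x. (tent h x - g x)^q)"
    using h q by (intro perturbation(1)) auto
  have "(LBINT x. \<beta> x) = real q * (4 * h)^(q - 1) * M * (2 * h) + M^q * sqrt (pi * (4 * h))"
    unfolding \<beta>_def
    using indicator w by (simp add: Bochner_Integration.integral_add integrable_mult_right)
  then show "\<bar>(LBINT x. (tent h x - g x)^q) - (LBINT x. tent h x ^ q)\<bar>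
      \<le> (2 * real q + 4) * 4^q * sqrt h * h^(q + 1)"
    using perturbation(2) h q tent_perturbation_constant_le[OF h q] unfolding M_def by auto
qed

theorem lemma2p4:
  fixes q :: nat
  assumes "q \<ge> 2"
  shows "\<exists>C::real. \<forall>h::real. 0 < h \<and> h \<le> 1 \<longrightarrow>
    \<bar>(LBINT x. (LBINT t:{0<..}. sym_diff2 h (\<lambda>y. heat_kernel t y) x) ^ q)
        - (2::real) ^ (q + 1) / real (q + 1) * h ^ (q + 1)\<bar> \<le> C * sqrt h * h ^ (q + 1)
    \<and> \<bar>(LBINT x. (LBINT t:{0<..h}. sym_diff2 h (\<lambda>y. heat_kernel t y) x) ^ q)
        - (2::real) ^ (q + 1) / real (q + 1) * h ^ (q + 1)\<bar> \<le> C * sqrt h * h ^ (q + 1)"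
proof (intro exI[of _ "(2 * real q + 4) * 4^q"] allI impI conjI)
  fix h :: real
  assume "0 < h \<and> h \<le> 1"
  then have h: "0 < h" "h \<le> 1"
    by auto
  let ?g = "\<lambda>x. - sym_diff2 h (smoothed_abs h) x"
  have infinite: "(LBINT t:{0<..}. sym_diff2 h (\<lambda>y. heat_kernel t y) x) = tent h x" for x
    using h by (simp add: integral_sym_diff2_heat_kernel_Ioi sym_diff2_abs)
  have finite: "(LBINT t:{0<..h}. sym_diff2 h (\<lambda>y. heat_kernel t y) x) = tent h x - ?g x" for x
    using h by (simp add: integral_sym_diff2_heat_kernel_Ioc sym_diff2_abs)
  have tent_integral: "(LBINT x. tent h x ^ q) = 2^(q + 1) / real (q + 1) * h^(q + 1)"
    using h assms by (intro integral_tent_power) auto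
  have "continuous_on UNIV (smoothed_abs h)"
    by (rule DERIV_continuous_on has_real_derivative_smoothed_abs_space[OF h(1)])+
  then have "continuous_on UNIV ?g"
    by (intro continuous_intros)
  from integral_power_tent_minus_bound(2)[OF h assms this sym_diff2_smoothed_abs_bounds[OF h]]
  show "\<bar>(LBINT x. (LBINT t:{0<..h}. sym_diff2 h (\<lambda>y. heat_kernel t y) x) ^ q)
      - 2^(q + 1) / real (q + 1) * h^(q + 1)\<bar> \<le> (2 * real q + 4) * 4^q * sqrt h * h^(q + 1)"
    by (simp only: finite tent_integral)
  show "\<bar>(LBINT x. (LBINT t:{0<..}. sym_diff2 h (\<lambda>y. heat_kernel t y) x) ^ q)
      - 2^(q + 1) / real (q + 1) * h^(q + 1)\<bar> \<le> (2 * real q + 4) * 4^q * sqrt h * h^(q + 1)"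
    using h by (simp add: infinite tent_integral)
qed

end
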